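(* Let $n\geqslant 3$, $\mathbf{y}\in\mathbb{N}^n$ (positive integers), $1\leqslant r\leqslant n-1$ and $X\geqslant 1$. Then $$\#\mathcal{A}_r(\mathbf{y},X)=2^{n-r}\prod_{j=r+1}^n\frac{X}{d_1^{(j-1)}}+O\left(X^{n-r-1}\right),$$ with an implied constant independent of $\mathbf{y}$ and $X$.
   Context: Let $N=2^n-1$; for $h\in\{1,\dots,N\}$ write $h=\sum_{j=1}^n\varepsilon_j(h)2^{j-1}$, $\varepsilon_j(h)\in\{0,1\}$; $h\preceq\ell$ means $\varepsilon_j(h)\leqslant\varepsilon_j(\ell)$ for all $j$. There is a unique $N$-tuple $(z_h)$ of positive integers which is reduced (i.e. $\gcd(z_h,z_\ell)=1$ whenever $h,\ell$ are incomparable for $\preceq$) with $y_j=\prod_h z_h^{\varepsilon_j(h)}$ for all $j$; fix it. Put $d_i=\prod_{h}z_h^{1-\varepsilon_i(h)}$ for $1\leqslant i\leqslant n$; $d_{1,r}=\prod_{h:\ \varepsilon_1(h)=\cdots=\varepsilon_r(h)=0}z_h$ for $1\leqslant r\leqslant n$ (so $d_{1,1}=d_1$); and for $2\leqslant r\leqslant n$, $d_1^{(r-1)}=\prod_{h:\ \varepsilon_1(h)=\cdots=\varepsilon_{r-1}(h)=0,\ \varepsilon_r(h)=1}z_h$. Finally $$\mathcal{A}_r(\mathbf{y},X)=\Big\{(\alpha_{r+1},\dots,\alpha_n)\in\mathbb{Z}^{n-r}:\ \max_{r+1\leqslant i\leqslant n}|\alpha_i|\leqslant X,\ \sum_{i=r+1}^n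 d_i\alpha_i\equiv 0 \pmod{d_{1,r}}\Big\}.$$ *)

theory Defs
  imports Complex_Main "HOL-Library.FuncSet"
begin

definition eps :: "nat \<Rightarrow> nat \<Rightarrow> nat" where
  "eps j h = (h div 2 ^ (j - 1)) mod 2"

definition prec :: "nat \<Rightarrow> nat \<Rightarrow> nat \<Rightarrow> bool" where
  "prec n h l \<longleftrightarrow> (\<forall>j\<in>{1..n}. eps j h \<le> eps j l)"

definition idxN :: "nat \<Rightarrow> nat set" where
  "idxN n = {1..2 ^ n - 1}"

definition reduced_rep :: "nat \<Rightarrow> (nat \<Rightarrow> nat) \<Rightarrow> (nat \<Rightarrow> nat) \<Rightarrow> bool" where
  "reduced_rep n y z \<longleftrightarrow>
     (\<forall>h\<in>idxN n. z h > 0) \<and>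
     (\<forall>h\<in>idxN n. \<forall>l\<in>idxN n. \<not> prec n h l \<and> \<not> prec n l h \<longrightarrow> coprime (z h) (z l)) \<and>
     (\<forall>j\<in>{1..n}. y j = (\<Prod>h\<in>idxN n. z h ^ eps j h))"

definition dd :: "nat \<Rightarrow> (nat \<Rightarrow> nat) \<Rightarrow> nat \<Rightarrow> nat" where
  "dd n z i = (\<Prod>h\<in>idxN n. z h ^ (1 - eps i h))"

definition d1r :: "nat \<Rightarrow> (nat \<Rightarrow> nat) \<Rightarrow> nat \<Rightarrow> nat" where
  "d1r n z r = (\<Prod>h\<in>{h\<in>idxN n. \<forall>i\<in>{1..r}. eps i h = 0}. z h)"

definition d1sup :: "nat \<Rightarrow> (nat \<Rightarrow> nat) \<Rightarrow> nat \<Rightarrow> nat" where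
  "d1sup n z k = (\<Prod>h\<in>{h\<in>idxN n. (\<forall>i\<in>{1..k}. eps i h = 0) \<and> eps (k + 1) h = 1}. z h)"

text \<open>A_r(y,X): tuples (alpha_{r+1},...,alpha_n), encoded as extensional functions on {r+1..n}.\<close>
definition A_set :: "nat \<Rightarrow> (nat \<Rightarrow> nat) \<Rightarrow> nat \<Rightarrow> real \<Rightarrow> (nat \<Rightarrow> int) set" where
  "A_set n z r X = {\<alpha> \<in> PiE {r+1..n} (\<lambda>_. {a::int. \<bar>real_of_int a\<bar> \<le> X}).
      int (d1r n z r) dvd (\<Sum>i=r+1..n. int (dd n z i) * \<alpha> i)}"

end

(*
  Fix all but one coordinate a of a point in the box: the congruence m | c a + S in a is
  solvable iff gcd(m, c) | S, and then a runs through a residue class modulo m / gcd(m, c),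
  which meets [-X, X] in 2X gcd(m, c) / m + O(1) points. The admissible values of the other
  coordinates satisfy a congruence of the same shape with modulus gcd(m, c), so induction on
  the number of variables counts (2X)^k gcd(m, c_1, ..., c_k) / m + O(X^(k-1)) points.

  For A_r the gcd is 1. A prime p dividing d_{1,r} divides some z_h with no digit among the
  first r; choose such an h with as few digits as possible below it for \<preceq>. Any digit j of h
  exceeds r, and p cannot divide d_j: a z_h' divisible by p with digit j of h' zero forces h'
  to be comparable with h by reducedness, hence strictly below it. Finally d_{1,r} is the
  product of the d_1^(j-1), sorting the h by their first nonzero digit.
*)

theory Submission
  imports Defs "HOL-Computational_Algebra.Primes"
begin

definition int_interval :: "real \<Rightarrow> int set" where
  "int_interval X = {a. \<bar>real_of_int a\<bar> \<le> X}"

lemma int_interval_subset_ceiling: "int_interval X \<subseteq> {-\<lceil>X\<rceil>..\<lceil>X\<rceil>}"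
proof
  fix a assume "a \<in> int_interval X"
  then have "\<bar>real_of_int a\<bar> \<le> of_int \<lceil>X\<rceil>"
    using le_of_int_ceiling[of X] by (simp add: int_interval_def) linarith
  then show "a \<in> {-\<lceil>X\<rceil>..\<lceil>X\<rceil>}" by (simp add: abs_le_iff)
qed

lemma finite_int_interval [simp]: "finite (int_interval X)"
  using finite_subset[OF int_interval_subset_ceiling] by blast

lemma card_residue_class_in_int_interval:
  fixes M t :: int and X :: real
  assumes M: "M > 0" and X: "X \<ge> 0"
  shows "\<bar>real (card {a \<in> int_interval X. M dvd a - t}) - 2 * X / M\<bar> \<le> 1"
proof -
  have Mr: "real_of_int M > 0" using M by simp
  define lo where "lo = \<lceil>(- X - t) / M\<rceil>"
  define hi where "hi = \<lfloor>(X - t) / M\<rfloor>"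
  have bound_iff: "\<bar>real_of_int (t + M * s)\<bar> \<le> X \<longleftrightarrow> s \<in> {lo..hi}" for s
  proof -
    have "\<bar>real_of_int (t + M * s)\<bar> \<le> X \<longleftrightarrow> - X - t \<le> real_of_int s * M \<and> real_of_int s * M \<le> X - t"
      by (simp add: abs_le_iff mult.commute) linarith
    also have "\<dots> \<longleftrightarrow> (- X - t) / M \<le> s \<and> s \<le> (X - t) / M"
      using Mr by (simp only: pos_le_divide_eq pos_divide_le_eq)
    finally show ?thesis unfolding lo_def hi_def by (simp add: ceiling_le_iff le_floor_iff)
  qed
  have "{a \<in> int_interval X. M dvd a - t} = (\<lambda>s. t + M * s) ` {lo..hi}"
  proof (intro set_eqI iffI)
    fix a assume a: "a \<in> {a \<in> int_interval X. M dvd a - t}"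
    then obtain s where s: "a = t + M * s" by (metis add_diff_cancel_left' diff_add_cancel dvdE mem_Collect_eq)
    then have "s \<in> {lo..hi}" using a bound_iff by (simp add: int_interval_def)
    then show "a \<in> (\<lambda>s. t + M * s) ` {lo..hi}" using s by blast
  qed (use bound_iff in \<open>auto simp: int_interval_def\<close>)
  moreover have "inj_on (\<lambda>s. t + M * s) {lo..hi}" using M by (auto simp: inj_on_def)
  ultimately have card_eq: "card {a \<in> int_interval X. M dvd a - t} = nat (hi - lo + 1)"
    by (simp add: card_image)
  have "real_of_int hi \<le> (X - t) / M" "(X - t) / M < real_of_int hi + 1"
    "(- X - t) / M \<le> real_of_int lo" "real_of_int lo < (- X - t) / M + 1"
    unfolding hi_def lo_def by linarith+
  moreover have "(X - t) / M - (- X - t) / M = 2 * X / M" by (simp add: diff_divide_distrib[symmetric])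
  moreover have "2 * X / M \<ge> 0" using M X by simp
  ultimately show ?thesis unfolding card_eq by (cases "hi - lo + 1 \<ge> 0") linarith+
qed

lemma card_int_interval_le: "X \<ge> 0 \<Longrightarrow> real (card (int_interval X)) \<le> 2 * X + 1"
  using card_residue_class_in_int_interval[of 1 X 0] by simp

lemma linear_congruence_unsolvable:
  fixes m c s a :: int
  assumes "\<not> gcd m c dvd s"
  shows "\<not> m dvd c * a + s"
  using assms by (meson dvd_add_right_iff dvd_mult2 dvd_trans gcd_dvd1 gcd_dvd2)

lemma linear_congruence_residue_class:
  fixes m c s :: int
  assumes m: "m \<noteq> 0" and solvable: "gcd m c dvd s"
  obtains t where "\<And>a. m dvd c * a + s \<longleftrightarrow> m div gcd m c dvd a - t"
proof -
  define g where "g = gcd m c"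
  have g: "g \<noteq> 0" using m by (simp add: g_def)
  obtain u v where uv: "u * c + v * m = g" using bezout_int[of c m] by (auto simp: g_def gcd.commute)
  obtain s' where s': "s = g * s'" using solvable by (auto simp: g_def elim: dvdE)
  obtain m' where m': "m = g * m'" using gcd_dvd1[of m c] unfolding g_def by (elim dvdE) blast
  obtain c' where c': "c = g * c'" using gcd_dvd2[of m c] unfolding g_def by (elim dvdE) blast
  have md: "m div g = m'" using m' g by simp
  have cop: "coprime m' c'"
    using div_gcd_coprime[of m c] m c' g unfolding g_def[symmetric] md by simp
  have shift: "c * a + s = c * (a + u * s') + m * (v * s')" for a
    unfolding s' uv[symmetric] by (simp add: ring_distribs)
  have "m dvd c * a + s \<longleftrightarrow> m' dvd a + u * s'" for a
  proof -
    have "m dvd c * a + s \<longleftrightarrow> m dvd c * (a + u * s')" unfolding shift by (simp add: dvd_add_left_iff)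
    also have "\<dots> \<longleftrightarrow> m' dvd c' * (a + u * s')" unfolding m' c' using g by (simp add: mult.assoc)
    also have "\<dots> \<longleftrightarrow> m' dvd a + u * s'" using cop by (simp add: coprime_dvd_mult_right_iff)
    finally show ?thesis .
  qed
  moreover have "m div gcd m c = m'" unfolding g_def[symmetric] by (fact md)
  ultimately show ?thesis using that[of "- u * s'"] by simp
qed

lemma card_linear_congruence_in_int_interval:
  fixes m c s :: int and X :: real
  assumes m: "m > 0" and X: "X \<ge> 0" and solvable: "gcd m c dvd s"
  shows "\<bar>real (card {a \<in> int_interval X. m dvd c * a + s}) - 2 * X * gcd m c / m\<bar> \<le> 1"
proof -
  obtain t where t: "\<And>a. m dvd c * a + s \<longleftrightarrow> m div gcd m c dvd a - t"
    using linear_congruence_residue_class[OF _ solvable] m by auto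
  have "m div gcd m c > 0"
    using m by (simp add: pos_imp_zdiv_pos_iff zdvd_imp_le)
  moreover have "real_of_int (m div gcd m c) = m / gcd m c" by (simp add: of_int_div)
  ultimately show ?thesis
    using card_residue_class_in_int_interval[of "m div gcd m c" X t] X by (simp add: t)
qed

definition box_congruence_points :: "'i set \<Rightarrow> ('i \<Rightarrow> int) \<Rightarrow> int \<Rightarrow> real \<Rightarrow> ('i \<Rightarrow> int) set" where
  "box_congruence_points I c m X =
     {\<alpha> \<in> PiE I (\<lambda>_. int_interval X). m dvd (\<Sum>i\<in>I. c i * \<alpha> i)}"

lemma card_PiE_insert_filter:
  assumes J: "finite J" and i: "i \<notin> J" and B: "finite B"
  shows "card {\<alpha> \<in> PiE (insert i J) (\<lambda>_. B). P \<alpha>} = (\<Sum>\<beta>\<in>PiE J (\<lambda>_. B). card {a \<in> B. P (\<beta>(i := a))})"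
proof -
  define S where "S = (SIGMA \<beta>:PiE J (\<lambda>_. B). {a \<in> B. P (\<beta>(i := a))})"
  have "{\<alpha> \<in> PiE (insert i J) (\<lambda>_. B). P \<alpha>} = (\<lambda>(\<beta>, a). \<beta>(i := a)) ` S"
  proof (intro set_eqI iffI)
    fix \<alpha> assume \<alpha>: "\<alpha> \<in> {\<alpha> \<in> PiE (insert i J) (\<lambda>_. B). P \<alpha>}"
    have "\<alpha>(i := undefined) \<in> PiE J (\<lambda>_. B)"
      using \<alpha> i by (auto simp: PiE_iff extensional_def)
    then have "(\<alpha>(i := undefined), \<alpha> i) \<in> S" using \<alpha> by (simp add: S_def PiE_iff)
    then show "\<alpha> \<in> (\<lambda>(\<beta>, a). \<beta>(i := a)) ` S" by (rule rev_image_eqI) simp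
  next
    fix \<alpha> assume "\<alpha> \<in> (\<lambda>(\<beta>, a). \<beta>(i := a)) ` S"
    then obtain \<beta> a where \<beta>: "\<beta> \<in> PiE J (\<lambda>_. B)" and a: "a \<in> B"
      and P: "P (\<beta>(i := a))" and \<alpha>_eq: "\<alpha> = \<beta>(i := a)"
      unfolding S_def by auto
    have "\<beta>(i := a) \<in> PiE (insert i J) (\<lambda>_. B)" using PiE_fun_upd[OF a \<beta>] .
    then show "\<alpha> \<in> {\<alpha> \<in> PiE (insert i J) (\<lambda>_. B). P \<alpha>}" using P \<alpha>_eq by simp
  qed
  moreover have "inj_on (\<lambda>(\<beta>, a). \<beta>(i := a)) S"
  proof (rule inj_onI, clarsimp)
    fix \<beta> a \<beta>' a' assume "(\<beta>, a) \<in> S" "(\<beta>', a') \<in> S" and eq: "\<beta>(i := a) = \<beta>'(i := a')"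
    then have "\<beta> \<in> PiE J (\<lambda>_. B)" "\<beta>' \<in> PiE J (\<lambda>_. B)" by (simp_all add: S_def)
    then have "\<beta> i = \<beta>' i" using i by (metis PiE_arb)
    then show "\<beta> = \<beta>' \<and> a = a'" using eq by (metis fun_upd_triv fun_upd_upd fun_upd_same)
  qed
  ultimately show ?thesis using J B by (simp add: card_image S_def finite_PiE)
qed

lemma card_box_congruence_points_insert:
  assumes J: "finite J" and i: "i \<notin> J"
  shows "card (box_congruence_points (insert i J) c m X) =
    (\<Sum>\<beta>\<in>box_congruence_points J c (gcd m (c i)) X.
       card {a \<in> int_interval X. m dvd c i * a + (\<Sum>j\<in>J. c j * \<beta> j)})"
proof -
  define f where "f \<beta> = card {a \<in> int_interval X. m dvd c i * a + (\<Sum>j\<in>J. c j * \<beta> j)}" for \<beta>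
  have sum_upd: "(\<Sum>j\<in>insert i J. c j * (\<beta>(i := a)) j) = c i * a + (\<Sum>j\<in>J. c j * \<beta> j)" for \<beta> a
  proof -
    have "(\<Sum>j\<in>J. c j * (\<beta>(i := a)) j) = (\<Sum>j\<in>J. c j * \<beta> j)"
      using i by (intro sum.cong) auto
    then show ?thesis using J i by simp
  qed
  have "card (box_congruence_points (insert i J) c m X) = (\<Sum>\<beta>\<in>PiE J (\<lambda>_. int_interval X). f \<beta>)"
    unfolding box_congruence_points_def f_def
    using card_PiE_insert_filter[OF J i finite_int_interval[of X],
        where P = "\<lambda>\<alpha>. m dvd (\<Sum>j\<in>insert i J. c j * \<alpha> j)"]
    by (simp only: sum_upd)
  also have "\<dots> = (\<Sum>\<beta>\<in>box_congruence_points J c (gcd m (c i)) X. f \<beta>)"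
  proof (rule sum.mono_neutral_right)
    show "finite (PiE J (\<lambda>_. int_interval X))" using J by (simp add: finite_PiE)
    show "\<forall>\<beta>\<in>PiE J (\<lambda>_. int_interval X) - box_congruence_points J c (gcd m (c i)) X. f \<beta> = 0"
      by (auto simp: f_def box_congruence_points_def linear_congruence_unsolvable)
  qed (auto simp: box_congruence_points_def)
  finally show ?thesis unfolding f_def .
qed

lemma card_box_congruence_points_le:
  assumes "finite I" and "X \<ge> 1"
  shows "real (card (box_congruence_points I c m X)) \<le> (3 * X) ^ card I"
proof -
  have "card (box_congruence_points I c m X) \<le> card (PiE I (\<lambda>_. int_interval X))"
    using assms by (auto simp: box_congruence_points_def finite_PiE intro: card_mono)
  also have "\<dots> = card (int_interval X) ^ card I" using assms by (simp add: card_PiE)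
  finally have "real (card (box_congruence_points I c m X)) \<le> real (card (int_interval X)) ^ card I"
    by (metis of_nat_le_iff of_nat_power)
  also have "\<dots> \<le> (3 * X) ^ card I"
    using card_int_interval_le[of X] assms by (intro power_mono) auto
  finally show ?thesis .
qed

theorem card_box_congruence_points_approx:
  fixes c :: "'i \<Rightarrow> int" and m :: int and X :: real
  assumes "finite I" and "m > 0" and X: "X \<ge> 1"
  shows "\<bar>real (card (box_congruence_points I c m X)) - (2 * X) ^ card I * gcd m (Gcd (c ` I)) / m\<bar>
           \<le> card I * 3 ^ card I * X ^ (card I - 1)"
  using assms(1,2)
proof (induction I arbitrary: m rule: finite_induct)
  case empty
  then show ?case by (simp add: box_congruence_points_def)
next
  case (insert i J)
  define k where "k = card J"
  define g where "g = gcd m (c i)"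
  define q where "q = 2 * X * g / m"
  define T where "T = box_congruence_points J c g X"
  define G where "G = gcd m (Gcd (c ` insert i J))"
  define A where "A = real (card (box_congruence_points (insert i J) c m X))"
  define M where "M = (2 * X) ^ k * G / g"
  have g: "0 < g" "g \<le> m" using insert.prems by (simp_all add: g_def zdvd_imp_le)
  then have q: "0 \<le> q" "q \<le> 2 * X" using insert.prems X by (simp_all add: q_def field_simps)
  have T_le: "real (card T) \<le> 3 ^ k * X ^ k"
    using card_box_congruence_points_le[OF insert.hyps(1) X] by (simp add: T_def k_def power_mult_distrib)
  have fibres: "\<bar>A - card T * q\<bar> \<le> card T"
  proof -
    have "A - card T * q
        = (\<Sum>\<beta>\<in>T. real (card {a \<in> int_interval X. m dvd c i * a + (\<Sum>j\<in>J. c j * \<beta> j)}) - q)"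
      using card_box_congruence_points_insert[OF insert.hyps]
      by (simp add: A_def T_def g_def sum_subtractf)
    also have "\<bar>\<dots>\<bar> \<le> (\<Sum>\<beta>\<in>T. 1)"
      using card_linear_congruence_in_int_interval[OF insert.prems] X
      by (intro order.trans[OF sum_abs] sum_mono) (auto simp: T_def box_congruence_points_def g_def q_def)
    finally show ?thesis by simp
  qed
  have "gcd g (Gcd (c ` J)) = G" by (simp add: g_def G_def gcd.assoc)
  then have IH: "\<bar>real (card T) - M\<bar> \<le> k * 3 ^ k * X ^ (k - 1)"
    using insert.IH[OF g(1)] by (simp add: T_def k_def M_def)
  have "A - q * M = (A - card T * q) + q * (card T - M)" by (simp add: algebra_simps)
  then have "\<bar>A - q * M\<bar> \<le> \<bar>A - card T * q\<bar> + q * \<bar>card T - M\<bar>"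
    using abs_triangle_ineq[of "A - card T * q" "q * (card T - M)"] q(1) by (simp add: abs_mult)
  also have "\<dots> \<le> card T + q * (k * 3 ^ k * X ^ (k - 1))"
    using fibres mult_left_mono[OF IH q(1)] by simp
  also have "\<dots> \<le> 3 ^ k * X ^ k + 2 * X * (k * 3 ^ k * X ^ (k - 1))"
    using X by (intro add_mono[OF T_le] mult_right_mono[OF q(2)]) simp
  also have "\<dots> = (2 * k + 1) * 3 ^ k * X ^ k"
    by (cases k) (simp_all add: algebra_simps)
  also have "\<dots> \<le> Suc k * 3 ^ Suc k * X ^ k" using X by (intro mult_right_mono) auto
  finally show ?case
    using insert.hyps g(1) by (simp add: A_def M_def k_def G_def q_def field_simps)
qed

lemma finite_idxN [simp]: "finite (idxN n)"
  by (simp add: idxN_def)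

lemma eps_cases: "eps j h = 0 \<or> eps j h = 1"
  unfolding eps_def by presburger

lemma eps_Suc_eq_1_iff: "eps (Suc k) h = 1 \<longleftrightarrow> bit h k"
  by (simp add: eps_def bit_iff_odd odd_iff_mod_2_eq_one)

lemma idxN_has_bit:
  assumes "h \<in> idxN n"
  obtains j where "j \<in> {1..n}" and "eps j h = 1"
proof -
  from assms have "h \<noteq> 0" and "take_bit n h = h" by (auto simp: idxN_def take_bit_nat_eq_self_iff)
  moreover obtain k where "bit h k" using \<open>h \<noteq> 0\<close> bit_eq_iff[of h 0] by auto
  ultimately have "bit h k" and "k < n" by (metis bit_take_bit_iff)+
  then show ?thesis using that[of "Suc k"] eps_Suc_eq_1_iff by auto
qed

definition bit_positions :: "nat \<Rightarrow> nat \<Rightarrow> nat set" where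
  "bit_positions n h = {j \<in> {1..n}. eps j h = 1}"

lemma prec_iff_bit_positions_subset: "prec n h l \<longleftrightarrow> bit_positions n h \<subseteq> bit_positions n l"
proof -
  have "eps j h \<le> eps j l \<longleftrightarrow> (eps j h = 1 \<longrightarrow> eps j l = 1)" for j
    using eps_cases[of j h] eps_cases[of j l] by auto
  then show ?thesis by (auto simp: prec_def bit_positions_def)
qed

lemma prime_dvd_dd_iff:
  assumes "prime p"
  shows "p dvd dd n z j \<longleftrightarrow> (\<exists>h\<in>idxN n. eps j h = 0 \<and> p dvd z h)"
proof -
  have "p dvd z h ^ (1 - eps j h) \<longleftrightarrow> eps j h = 0 \<and> p dvd z h" for h
    using eps_cases[of j h] assms by (auto simp: prime_dvd_power_iff)
  then show ?thesis using assms by (simp add: dd_def prime_dvd_prod_iff)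
qed

lemma prime_dvd_d1r_iff:
  assumes "prime p"
  shows "p dvd d1r n z r \<longleftrightarrow> (\<exists>h\<in>idxN n. (\<forall>i\<in>{1..r}. eps i h = 0) \<and> p dvd z h)"
  using assms by (auto simp: d1r_def prime_dvd_prod_iff)

lemma prime_dvd_d1r_imp_not_dvd_dd:
  assumes R: "reduced_rep n y z" and r: "r \<le> n" and p: "prime p" and p_d1r: "p dvd d1r n z r"
  shows "\<exists>j\<in>{r+1..n}. \<not> p dvd dd n z j"
proof -
  obtain h1 where h1: "h1 \<in> idxN n" "\<forall>i\<in>{1..r}. eps i h1 = 0" "p dvd z h1"
    using p_d1r prime_dvd_d1r_iff[OF p] by blast
  define C where "C = {h \<in> idxN n. p dvd z h \<and> prec n h h1}"
  have "h1 \<in> C" using h1 by (simp add: C_def prec_iff_bit_positions_subset)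
  then obtain h0 where h0: "h0 \<in> C" and h0_min: "\<And>h. h \<in> C \<Longrightarrow> card (bit_positions n h0) \<le> card (bit_positions n h)"
    using ex_has_least_nat[of "\<lambda>h. h \<in> C" h1 "\<lambda>h. card (bit_positions n h)"] by blast
  obtain j where j: "j \<in> {1..n}" "eps j h0 = 1" using idxN_has_bit h0 by (auto simp: C_def)
  have "eps j h0 \<le> eps j h1" using h0 j(1) by (auto simp: C_def prec_def)
  then have "j \<notin> {1..r}" using j(2) h1(2) by auto
  then have "j \<in> {r+1..n}" using j(1) by auto
  moreover have "\<not> p dvd dd n z j"
  proof
    assume "p dvd dd n z j"
    then obtain h where h: "h \<in> idxN n" "eps j h = 0" "p dvd z h" using prime_dvd_dd_iff[OF p] by blast
    have "p dvd z h0" using h0 by (simp add: C_def)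
    then have "\<not> coprime (z h) (z h0)" using h(3) p by (meson coprime_common_divisor not_prime_unit)
    then have "prec n h h0 \<or> prec n h0 h" using R h(1) h0 by (auto simp: reduced_rep_def C_def)
    moreover have "\<not> prec n h0 h" using j h(2) by (force simp: prec_def)
    ultimately have smaller: "bit_positions n h \<subset> bit_positions n h0"
      using j h(2) by (auto simp: prec_iff_bit_positions_subset bit_positions_def)
    have "prec n h0 h1" using h0 by (simp add: C_def)
    then have "prec n h h1" using smaller by (simp add: prec_iff_bit_positions_subset)
    then have "h \<in> C" using h by (simp add: C_def)
    moreover have "card (bit_positions n h) < card (bit_positions n h0)"
      using smaller by (intro psubset_card_mono) (simp_all add: bit_positions_def)
    ultimately show False using h0_min by fastforce
  qed
  ultimately show ?thesis by blast
qed

lemma coprime_d1r_Gcd_dd: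
  assumes "reduced_rep n y z" and "r \<le> n"
  shows "coprime (d1r n z r) (Gcd (dd n z ` {r+1..n}))"
proof (rule ccontr)
  assume "\<not> coprime (d1r n z r) (Gcd (dd n z ` {r+1..n}))"
  then obtain p where p: "prime p" "p dvd d1r n z r" "p dvd Gcd (dd n z ` {r+1..n})"
    using prime_factor_nat[of "gcd (d1r n z r) (Gcd (dd n z ` {r+1..n}))"] by (auto simp: coprime_iff_gcd_eq_1)
  then show False
    using prime_dvd_d1r_imp_not_dvd_dd[OF assms p(1,2)] by (auto simp: dvd_Gcd_iff)
qed

lemma d1r_eq_d1r_Suc_mult_d1sup: "d1r n z r = d1r n z (Suc r) * d1sup n z r"
proof -
  define H where "H = {h \<in> idxN n. \<forall>i\<in>{1..r}. eps i h = 0}"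
  have "H \<inter> {h. eps (Suc r) h = 1} = {h \<in> idxN n. (\<forall>i\<in>{1..r}. eps i h = 0) \<and> eps (r + 1) h = 1}"
    by (auto simp: H_def)
  moreover have "H - {h. eps (Suc r) h = 1} = {h \<in> idxN n. \<forall>i\<in>{1..Suc r}. eps i h = 0}"
    using eps_cases[of "Suc r"] by (auto simp: H_def atLeastAtMostSuc_conv)
  ultimately show ?thesis
    using prod.Int_Diff[of H z "{h. eps (Suc r) h = 1}"]
    by (simp add: H_def d1r_def d1sup_def mult.commute)
qed

lemma d1r_self_eq_1: "d1r n z n = 1"
proof -
  have "\<not> (\<forall>i\<in>{1..n}. eps i h = 0)" if "h \<in> idxN n" for h
    using idxN_has_bit[OF that] by (metis zero_neq_one)
  then show ?thesis unfolding d1r_def by (intro prod.neutral) blast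
qed

lemma d1r_eq_prod_d1sup:
  assumes "r \<le> n"
  shows "d1r n z r = (\<Prod>j=r+1..n. d1sup n z (j - 1))"
  using assms
proof (induction r rule: inc_induct)
  case base
  then show ?case by (simp add: d1r_self_eq_1)
next
  case (step r)
  then show ?case by (simp add: d1r_eq_d1r_Suc_mult_d1sup[of n z r] prod.atLeast_Suc_atMost)
qed

lemma A_set_eq_box_congruence_points:
  "A_set n z r X = box_congruence_points {r+1..n} (\<lambda>i. int (dd n z i)) (int (d1r n z r)) X"
  by (simp add: A_set_def box_congruence_points_def int_interval_def)

lemma d1r_pos: "\<forall>h\<in>idxN n. z h > 0 \<Longrightarrow> d1r n z r > 0"
  unfolding d1r_def by (auto intro: prod_pos)

lemma power_div_d1r_eq_prod_d1sup:
  assumes "r \<le> n"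
  shows "(2 * X) ^ (n - r) / d1r n z r = 2 ^ (n - r) * (\<Prod>j=r+1..n. X / real (d1sup n z (j - 1)))"
  using assms by (simp add: d1r_eq_prod_d1sup prod_dividef power_mult_distrib)

theorem mainTheorem3:
  fixes n r :: nat
  assumes "n \<ge> 3" and "1 \<le> r" and "r \<le> n - 1"
  shows "\<exists>C::real. \<forall>(y::nat \<Rightarrow> nat) (z::nat \<Rightarrow> nat) (X::real).
           (\<forall>j\<in>{1..n}. y j > 0) \<and> reduced_rep n y z \<and> X \<ge> 1 \<longrightarrow>
           \<bar>real (card (A_set n z r X))
              - 2 ^ (n - r) * (\<Prod>j=r+1..n. X / real (d1sup n z (j - 1)))\<bar>
             \<le> C * X ^ (n - r - 1)"
proof (intro exI[of _ "real (n - r) * 3 ^ (n - r)"] allI impI, elim conjE)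
  fix y z :: "nat \<Rightarrow> nat" and X :: real
  assume R: "reduced_rep n y z" and X: "X \<ge> 1"
  have r: "r \<le> n" using assms by simp
  have "(\<lambda>i. int (dd n z i)) ` {r+1..n} = int ` dd n z ` {r+1..n}" by (simp add: image_image)
  then have "gcd (int (d1r n z r)) (Gcd ((\<lambda>i. int (dd n z i)) ` {r+1..n})) = 1"
    using coprime_d1r_Gcd_dd[OF R r] by (simp add: Gcd_int_eq gcd_int_int_eq coprime_iff_gcd_eq_1)
  then show "\<bar>real (card (A_set n z r X)) - 2 ^ (n - r) * (\<Prod>j=r+1..n. X / real (d1sup n z (j - 1)))\<bar>
      \<le> real (n - r) * 3 ^ (n - r) * X ^ (n - r - 1)"
    using card_box_congruence_points_approx[of "{r+1..n}" "int (d1r n z r)" X "\<lambda>i. int (dd n z i)"]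
      d1r_pos[of n z r] R X power_div_d1r_eq_prod_d1sup[OF r, of X z]
    by (simp add: A_set_eq_box_congruence_points reduced_rep_def)
qed

end
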